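(* Let $E$ be a graph with finitely many vertices and $K$ a field of characteristic $0$. Assume $E$ contains an edge $f$ which is the initial edge of an infinite path $q=fp$ (with $p$ an infinite path) such that $s(f)\ne r(f)=s(p)$. Then $\langle 1+2f^*,\ 1+2f\rangle$ is a non-cyclic free subgroup of $L_K(E)^\times$.
   Context: A graph $E=(E^0,E^1,r,s)$; $L_K(E)$ is the free associative $K$-algebra on $E^0\cup E^1\cup\{e^*\}$ subject to $vv'=\delta_{v,v'}v$, $s(e)e=er(e)=e$, $r(e)e^*=e^*s(e)=e^*$, $e^*f=\delta_{e,f}r(e)$, and $v=\sum_{s(e)=v}ee^*$ for every vertex $v$ emitting a finite nonzero number of edges; with $E^0$ finite it is unital with $1=\sum_v v$. An infinite path is $e_1e_2\cdots$ with $r(e_i)=s(e_{i+1})$, and its source is $s(e_1)$. *)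

theory Defs
  imports "HOL-Algebra.Algebra"
begin

text \<open>Generators of the free algebra underlying the Leavitt path algebra:
  vertices, real edges and ghost edges.\<close>
datatype ('v, 'e) lgen = Vx 'v | Ed 'e | Gh 'e

text \<open>Noncommutative polynomials: finitely supported functions from words to K.\<close>
definition fa_carrier :: "('g list \<Rightarrow> 'k::field) set" where
  "fa_carrier = {f. finite {w. f w \<noteq> 0}}"

definition fa_mult :: "('g list \<Rightarrow> 'k::field) \<Rightarrow> ('g list \<Rightarrow> 'k) \<Rightarrow> 'g list \<Rightarrow> 'k" where
  "fa_mult f g w = (\<Sum>(u, v) \<in> {(u, v). u @ v = w}. f u * g v)"

definition fa_mon :: "'g list \<Rightarrow> 'g list \<Rightarrow> 'k::field" where
  "fa_mon w = (\<lambda>x. if x = w then 1 else 0)"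

definition free_alg :: "('g list \<Rightarrow> 'k::field) ring" where
  "free_alg = \<lparr>carrier = fa_carrier, Group.monoid.mult = fa_mult, Group.monoid.one = fa_mon [],
               ring.zero = (\<lambda>_. 0), ring.add = (\<lambda>f g x. f x + g x)\<rparr>"

text \<open>The defining relations, as elements of the
  free algebra (each relation a = b is encoded as a - b).\<close>
definition leavitt_rels :: "('e \<Rightarrow> 'v) \<Rightarrow> ('e \<Rightarrow> 'v) \<Rightarrow> (('v, 'e) lgen list \<Rightarrow> 'k::field) set" where
  "leavitt_rels s r =
     {(\<lambda>x. fa_mon [Vx v, Vx v'] x - (if v = v' then fa_mon [Vx v] x else 0)) | v v'. True}
   \<union> {(\<lambda>x. fa_mon [Vx (s e), Ed e] x - fa_mon [Ed e] x) | e. True}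
   \<union> {(\<lambda>x. fa_mon [Ed e, Vx (r e)] x - fa_mon [Ed e] x) | e. True}
   \<union> {(\<lambda>x. fa_mon [Vx (r e), Gh e] x - fa_mon [Gh e] x) | e. True}
   \<union> {(\<lambda>x. fa_mon [Gh e, Vx (s e)] x - fa_mon [Gh e] x) | e. True}
   \<union> {(\<lambda>x. fa_mon [Gh e, Ed e'] x - (if e = e' then fa_mon [Vx (r e)] x else 0)) | e e'. True}
   \<union> {(\<lambda>x. fa_mon [Vx v] x - (\<Sum>e\<in>{e. s e = v}. fa_mon [Ed e, Gh e] x)) | v.
        finite {e. s e = v} \<and> {e. s e = v} \<noteq> {}}"

definition lpa_ideal :: "('e \<Rightarrow> 'v) \<Rightarrow> ('e \<Rightarrow> 'v) \<Rightarrow> (('v, 'e) lgen list \<Rightarrow> 'k::field) set" where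
  "lpa_ideal s r = genideal free_alg (leavitt_rels s r)"

definition LPA :: "('e \<Rightarrow> 'v) \<Rightarrow> ('e \<Rightarrow> 'v) \<Rightarrow> (('v, 'e) lgen list \<Rightarrow> 'k::field) set ring" where
  "LPA s r = free_alg Quot (lpa_ideal s r)"

definition lpa_class :: "('e \<Rightarrow> 'v) \<Rightarrow> ('e \<Rightarrow> 'v) \<Rightarrow> (('v, 'e) lgen list \<Rightarrow> 'k::field)
    \<Rightarrow> (('v, 'e) lgen list \<Rightarrow> 'k) set" where
  "lpa_class s r x = lpa_ideal s r +>\<^bsub>free_alg\<^esub> x"

definition inf_path :: "('e \<Rightarrow> 'v) \<Rightarrow> ('e \<Rightarrow> 'v) \<Rightarrow> (nat \<Rightarrow> 'e) \<Rightarrow> bool" where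
  "inf_path s r p \<longleftrightarrow> (\<forall>i. r (p i) = s (p (Suc i)))"

definition letter_val :: "('a, 'b) monoid_scheme \<Rightarrow> bool \<times> 'a \<Rightarrow> 'a" where
  "letter_val G l = (if fst l then snd l else inv\<^bsub>G\<^esub> (snd l))"

definition word_val :: "('a, 'b) monoid_scheme \<Rightarrow> (bool \<times> 'a) list \<Rightarrow> 'a" where
  "word_val G w = foldr (\<lambda>l acc. letter_val G l \<otimes>\<^bsub>G\<^esub> acc) w \<one>\<^bsub>G\<^esub>"

definition reduced_word :: "(bool \<times> 'a) list \<Rightarrow> bool" where
  "reduced_word w \<longleftrightarrow>
     (\<forall>i. Suc i < length w \<longrightarrow> \<not> (snd (w ! i) = snd (w ! Suc i) \<and> fst (w ! i) \<noteq> fst (w ! Suc i)))"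

definition free_basis :: "('a, 'b) monoid_scheme \<Rightarrow> 'a set \<Rightarrow> bool" where
  "free_basis G B \<longleftrightarrow> B \<subseteq> carrier G \<and> generate G B = carrier G \<and>
     (\<forall>w. w \<noteq> [] \<and> set (map snd w) \<subseteq> B \<and> reduced_word w \<longrightarrow> word_val G w \<noteq> one G)"

definition free_group :: "('a, 'b) monoid_scheme \<Rightarrow> bool" where
  "free_group G \<longleftrightarrow> group G \<and> (\<exists>B. free_basis G B)"

definition cyclic_group :: "('a, 'b) monoid_scheme \<Rightarrow> bool" where
  "cyclic_group G \<longleftrightarrow> group G \<and> (\<exists>g \<in> carrier G. generate G {g} = carrier G)"

end

theory Submission
  imports Defs
begin

text \<open>
  $L_K(E)$ acts on the $K$-vector space with basis the infinite paths (the Chen module): a vertex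
  $v$ fixes the paths starting at $v$, an edge $e$ prepends itself, a ghost edge $e^*$ deletes a
  leading $e$, and all other paths are sent to $0$.  Write $p' = fp$.  Since $p$ does not start
  with $f$ and $f$ is not a loop, $f^*$ maps $p' \<mapsto> p$, $p \<mapsto> 0$ and $f$ maps
  $p \<mapsto> p'$, $p' \<mapsto> 0$.  So on the span of $p, p'$ the elements $1 + 2f^*$ and $1 + 2f$
  act by the Sanov matrices with rows $(1, 2), (0, 1)$ and $(1, 0), (2, 1)$.  They are units with
  inverses $1 - 2f^*$ and $1 - 2f$, because $f^* f^* = f^* s(f) r(f) f^* = 0$ and likewise
  $f f = 0$.  The ping-pong argument on $\mathbb{Z}^2$ shows that no nonempty reduced word in
  the Sanov matrices is the identity, so the two units satisfy no relation; a group freely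
  generated by two distinct elements is not abelian, hence not cyclic.
\<close>

lemma append_splits_eq: "{(u, v). u @ v = w} = (\<lambda>i. (take i w, drop i w)) ` {..length w}"
proof (rule subset_antisym)
  show "{(u, v). u @ v = w} \<subseteq> (\<lambda>i. (take i w, drop i w)) ` {..length w}"
  proof
    fix x assume "x \<in> {(u, v). u @ v = w}"
    then obtain u v where "x = (u, v)" "u @ v = w" by blast
    then show "x \<in> (\<lambda>i. (take i w, drop i w)) ` {..length w}"
      by (intro image_eqI[where x = "length u"]) auto
  qed
qed auto

lemma finite_append_splits [simp]: "finite {(u, v). u @ v = w}"
  by (simp add: append_splits_eq)

lemma fa_mult_assoc:
  fixes f g h :: "'g list \<Rightarrow> 'k::field"
  shows "fa_mult (fa_mult f g) h = fa_mult f (fa_mult g h)"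
proof (rule ext)
  fix w :: "'g list"
  let ?T = "{(a, b, c). a @ b @ c = w}" and ?P = "{(u, v). u @ v = w}"
  have "fa_mult (fa_mult f g) h w
      = (\<Sum>x\<in>?P. \<Sum>y\<in>{(a, b). a @ b = fst x}. f (fst y) * g (snd y) * h (snd x))"
    unfolding fa_mult_def by (simp add: sum_distrib_right case_prod_unfold)
  also have "\<dots> = (\<Sum>(x, y)\<in>Sigma ?P (\<lambda>x. {(a, b). a @ b = fst x}). f (fst y) * g (snd y) * h (snd x))"
    by (rule sum.Sigma) auto
  also have "\<dots> = (\<Sum>(a, b, c)\<in>?T. f a * g b * h c)"
    by (rule sum.reindex_bij_witness[where i = "\<lambda>(a, b, c). ((a @ b, c), (a, b))"
          and j = "\<lambda>((u, v), (a, b)). (a, b, v)"]) auto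
  also have "\<dots> = (\<Sum>(x, y)\<in>Sigma ?P (\<lambda>x. {(a, b). a @ b = snd x}). f (fst x) * g (fst y) * h (snd y))"
    by (rule sum.reindex_bij_witness[where j = "\<lambda>(a, b, c). ((a, b @ c), (b, c))"
          and i = "\<lambda>((u, v), (b, c)). (u, b, c)"]) auto
  also have "\<dots> = (\<Sum>x\<in>?P. \<Sum>y\<in>{(a, b). a @ b = snd x}. f (fst x) * g (fst y) * h (snd y))"
    by (rule sum.Sigma[symmetric]) auto
  also have "\<dots> = fa_mult f (fa_mult g h) w"
    unfolding fa_mult_def by (simp add: sum_distrib_left case_prod_unfold mult.assoc)
  finally show "fa_mult (fa_mult f g) h w = fa_mult f (fa_mult g h) w" .
qed

lemma fa_mult_mon: "fa_mult (fa_mon u) (fa_mon v) = (fa_mon (u @ v) :: 'g list \<Rightarrow> 'k::field)"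
proof (rule ext)
  fix w
  show "fa_mult (fa_mon u) (fa_mon v) w = (fa_mon (u @ v) w :: 'k)"
  proof (cases "w = u @ v")
    case True
    have "fa_mult (fa_mon u) (fa_mon v) w
        = (\<Sum>x\<in>{(u, v)}. (case x of (a, b) \<Rightarrow> fa_mon u a * fa_mon v b) :: 'k)"
      unfolding fa_mult_def
      by (rule sum.mono_neutral_right) (use True in \<open>auto simp: fa_mon_def split: if_splits\<close>)
    then show ?thesis using True by (simp add: fa_mon_def)
  next
    case False
    then show ?thesis
      unfolding fa_mult_def by (auto simp: fa_mon_def intro!: sum.neutral)
  qed
qed

lemma fa_mult_one_left: "fa_mult (fa_mon []) g = (g :: 'g list \<Rightarrow> 'k::field)"
proof (rule ext)
  fix w :: "'g list"
  have "fa_mult (fa_mon []) g w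
      = (\<Sum>x\<in>{([] :: 'g list, w)}. (case x of (u, v) \<Rightarrow> fa_mon [] u * g v) :: 'k)"
    unfolding fa_mult_def by (rule sum.mono_neutral_right) (auto simp: fa_mon_def split: if_splits)
  then show "fa_mult (fa_mon []) g w = g w"
    by (simp add: fa_mon_def)
qed

lemma fa_mult_one_right: "fa_mult g (fa_mon []) = (g :: 'g list \<Rightarrow> 'k::field)"
proof (rule ext)
  fix w :: "'g list"
  have "fa_mult g (fa_mon []) w
      = (\<Sum>x\<in>{(w, [] :: 'g list)}. (case x of (u, v) \<Rightarrow> g u * fa_mon [] v) :: 'k)"
    unfolding fa_mult_def by (rule sum.mono_neutral_right) (auto simp: fa_mon_def split: if_splits)
  then show "fa_mult g (fa_mon []) w = g w"
    by (simp add: fa_mon_def)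
qed

lemma fa_mult_add_right: "fa_mult f (\<lambda>x. g x + h x) = (\<lambda>x. fa_mult f g x + fa_mult f h x)"
  unfolding fa_mult_def by (auto simp: case_prod_unfold distrib_left sum.distrib)

lemma fa_mult_add_left: "fa_mult (\<lambda>x. f x + g x) h = (\<lambda>x. fa_mult f h x + fa_mult g h x)"
  unfolding fa_mult_def by (auto simp: case_prod_unfold distrib_right sum.distrib)

lemma fa_mult_smult_left: "fa_mult (\<lambda>x. c * f x) g = (\<lambda>x. c * fa_mult f g x)"
  unfolding fa_mult_def by (auto simp: sum_distrib_left case_prod_unfold mult.assoc)

lemma fa_mult_smult_right: "fa_mult f (\<lambda>x. c * g x) = (\<lambda>x. (c::'k::field) * fa_mult f g x)"
  unfolding fa_mult_def by (auto simp: sum_distrib_left case_prod_unfold mult.left_commute)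

lemma fa_carrier_iff: "f \<in> fa_carrier \<longleftrightarrow> finite {w. f w \<noteq> 0}"
  by (simp add: fa_carrier_def)

lemma fa_zero_in_carrier [simp]: "(\<lambda>w. 0) \<in> fa_carrier"
  by (simp add: fa_carrier_iff)

lemma fa_mon_in_carrier [simp]: "fa_mon w \<in> fa_carrier"
  by (simp add: fa_carrier_iff fa_mon_def)

lemma fa_add_in_carrier [simp]:
  "f \<in> fa_carrier \<Longrightarrow> g \<in> fa_carrier \<Longrightarrow> (\<lambda>x. f x + g x) \<in> fa_carrier"
  unfolding fa_carrier_iff by (rule finite_subset[of _ "{w. f w \<noteq> 0} \<union> {w. g w \<noteq> 0}"]) auto

lemma fa_diff_in_carrier [simp]:
  "f \<in> fa_carrier \<Longrightarrow> g \<in> fa_carrier \<Longrightarrow> (\<lambda>x. f x - g x) \<in> fa_carrier"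
  unfolding fa_carrier_iff by (rule finite_subset[of _ "{w. f w \<noteq> 0} \<union> {w. g w \<noteq> 0}"]) auto

lemma fa_smult_in_carrier [simp]: "f \<in> fa_carrier \<Longrightarrow> (\<lambda>x. c * f x) \<in> fa_carrier"
  unfolding fa_carrier_iff by (rule finite_subset[of _ "{w. f w \<noteq> 0}"]) auto

lemma fa_sum_in_carrier:
  "finite I \<Longrightarrow> (\<And>i. i \<in> I \<Longrightarrow> f i \<in> fa_carrier) \<Longrightarrow> (\<lambda>x. \<Sum>i\<in>I. f i x) \<in> fa_carrier"
proof (induction I rule: finite_induct)
  case (insert i I)
  then show ?case
    using fa_add_in_carrier[of "f i" "\<lambda>x. \<Sum>i\<in>I. f i x"] by simp
qed (simp add: fa_carrier_iff)

lemma fa_mult_support: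
  "{w. fa_mult f g w \<noteq> 0} \<subseteq> (\<lambda>(u, v). u @ v) ` ({w. f w \<noteq> 0} \<times> {w. g w \<noteq> 0})"
proof
  fix w assume "w \<in> {w. fa_mult f g w \<noteq> 0}"
  then obtain u v where "u @ v = w" "f u * g v \<noteq> 0"
    unfolding fa_mult_def by (auto elim!: sum.not_neutral_contains_not_neutral)
  then show "w \<in> (\<lambda>(u, v). u @ v) ` ({w. f w \<noteq> 0} \<times> {w. g w \<noteq> 0})"
    by force
qed

lemma fa_mult_in_carrier [simp]:
  "f \<in> fa_carrier \<Longrightarrow> g \<in> fa_carrier \<Longrightarrow> fa_mult f g \<in> fa_carrier"
  unfolding fa_carrier_iff by (rule finite_subset[OF fa_mult_support]) auto

definition one_add_gen :: "'k::field \<Rightarrow> 'g \<Rightarrow> 'g list \<Rightarrow> 'k" where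
  "one_add_gen c g = (\<lambda>x. fa_mon [] x + c * fa_mon [g] x)"

lemma one_add_gen_in_carrier [simp]: "one_add_gen c g \<in> fa_carrier"
  by (simp add: one_add_gen_def)

lemma free_alg_simps:
  "carrier free_alg = fa_carrier"
  "x \<otimes>\<^bsub>free_alg\<^esub> y = fa_mult x y"
  "x \<oplus>\<^bsub>free_alg\<^esub> y = (\<lambda>w. x w + y w)"
  "\<zero>\<^bsub>free_alg\<^esub> = (\<lambda>w. 0)"
  "\<one>\<^bsub>free_alg\<^esub> = fa_mon []"
  by (simp_all add: free_alg_def)

lemma free_alg_ring: "ring (free_alg :: ('g list \<Rightarrow> 'k::field) ring)"
proof (rule ringI)
  show "abelian_group (free_alg :: ('g list \<Rightarrow> 'k::field) ring)"
  proof (rule abelian_groupI)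
    fix x :: "'g list \<Rightarrow> 'k"
    assume "x \<in> carrier free_alg"
    then show "\<exists>y\<in>carrier free_alg. y \<oplus>\<^bsub>free_alg\<^esub> x = \<zero>\<^bsub>free_alg\<^esub>"
      by (intro bexI[where x = "\<lambda>w. - x w"]) (auto simp: free_alg_simps fa_carrier_iff)
  qed (auto simp: free_alg_simps add.assoc add.commute)
  show "monoid (free_alg :: ('g list \<Rightarrow> 'k::field) ring)"
    by (rule monoidI) (auto simp: free_alg_simps fa_mult_assoc fa_mult_one_left fa_mult_one_right)
qed (auto simp: free_alg_simps fa_mult_add_left fa_mult_add_right)

lemma free_alg_a_inv:
  assumes "F \<in> fa_carrier"
  shows "\<ominus>\<^bsub>free_alg\<^esub> F = (\<lambda>x. - F x :: 'k::field)"
proof -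
  interpret ring "free_alg :: ('g list \<Rightarrow> 'k) ring" by (rule free_alg_ring)
  show ?thesis
    by (rule add.inv_equality) (use assms in \<open>auto simp: free_alg_simps fa_carrier_iff\<close>)
qed

section \<open>The Chen module of infinite paths\<close>

definition path_cons :: "'e \<Rightarrow> (nat \<Rightarrow> 'e) \<Rightarrow> nat \<Rightarrow> 'e" where
  "path_cons e q = (\<lambda>i. case i of 0 \<Rightarrow> e | Suc j \<Rightarrow> q j)"

lemma path_cons_simps [simp]:
  "path_cons e q 0 = e" "path_cons e q (Suc i) = q i" "(\<lambda>i. path_cons e q (Suc i)) = q"
  by (auto simp: path_cons_def)

lemma path_cons_head_tail: "path_cons (q 0) (\<lambda>i. q (Suc i)) = q"
  by (rule ext) (auto simp: path_cons_def split: nat.splits)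

lemma inf_path_path_cons: "inf_path s r (path_cons e q) \<longleftrightarrow> r e = s (q 0) \<and> inf_path s r q"
  unfolding inf_path_def
  by (metis path_cons_simps(1,2) nat.exhaust)

lemma inf_path_head: "inf_path s r q \<Longrightarrow> r (q 0) = s (q (Suc 0))"
  by (simp add: inf_path_def)

lemma inf_path_tail: "inf_path s r q \<Longrightarrow> inf_path s r (\<lambda>i. q (Suc i))"
  by (simp add: inf_path_def)

text \<open>A word acts as the product of its letters, so its last letter acts first.
  \<open>act_coeff F q q'\<close> is the coefficient of \<open>q'\<close> in \<open>F \<cdot> q\<close>.\<close>

context
  fixes s r :: "'e \<Rightarrow> 'v"
begin

definition act_gen :: "('v, 'e) lgen \<Rightarrow> (nat \<Rightarrow> 'e) \<Rightarrow> (nat \<Rightarrow> 'e) option" where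
  "act_gen g q = (if inf_path s r q then
     (case g of
        Vx v \<Rightarrow> if s (q 0) = v then Some q else None
      | Ed e \<Rightarrow> if r e = s (q 0) then Some (path_cons e q) else None
      | Gh e \<Rightarrow> if q 0 = e then Some (\<lambda>i. q (Suc i)) else None)
   else None)"

fun act_word :: "('v, 'e) lgen list \<Rightarrow> (nat \<Rightarrow> 'e) \<Rightarrow> (nat \<Rightarrow> 'e) option" where
  "act_word [] q = Some q"
| "act_word (g # w) q = Option.bind (act_word w q) (act_gen g)"

lemma act_word_append: "act_word (u @ v) q = Option.bind (act_word v q) (act_word u)"
  by (induction u) auto

definition word_coeff :: "('v, 'e) lgen list \<Rightarrow> (nat \<Rightarrow> 'e) \<Rightarrow> (nat \<Rightarrow> 'e) \<Rightarrow> 'k::field" where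
  "word_coeff w q q' = (if act_word w q = Some q' then 1 else 0)"

definition act_coeff :: "(('v, 'e) lgen list \<Rightarrow> 'k::field) \<Rightarrow> (nat \<Rightarrow> 'e) \<Rightarrow> (nat \<Rightarrow> 'e) \<Rightarrow> 'k" where
  "act_coeff F q q' = (\<Sum>w | F w \<noteq> 0. F w * word_coeff w q q')"

lemma word_coeff_append:
  assumes "finite Q" "\<And>q'. act_word v q = Some q' \<Longrightarrow> q' \<in> Q"
  shows "word_coeff (u @ v) q q'' = (\<Sum>q'\<in>Q. word_coeff v q q' * word_coeff u q' q'' :: 'k::field)"
proof (cases "act_word v q")
  case None
  then show ?thesis by (simp add: word_coeff_def act_word_append)
next
  case (Some q1)
  then have "(\<Sum>q'\<in>Q. word_coeff v q q' * word_coeff u q' q'')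
      = (\<Sum>q'\<in>Q. if q' = q1 then word_coeff u q1 q'' else 0 :: 'k)"
    by (intro sum.cong) (auto simp: word_coeff_def)
  then show ?thesis
    using Some assms by (simp add: word_coeff_def act_word_append)
qed

lemma act_coeff_eq_sum:
  assumes "finite W" "{w. F w \<noteq> 0} \<subseteq> W"
  shows "act_coeff F q q' = (\<Sum>w\<in>W. F w * word_coeff w q q')"
  unfolding act_coeff_def by (rule sum.mono_neutral_left) (use assms in auto)

lemma act_coeff_add:
  assumes "F \<in> fa_carrier" "G \<in> fa_carrier"
  shows "act_coeff (\<lambda>x. F x + G x) q q' = act_coeff F q q' + act_coeff G q q'"
proof -
  let ?W = "{w. F w \<noteq> 0} \<union> {w. G w \<noteq> 0}"
  have "finite ?W" using assms by (simp add: fa_carrier_iff)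
  then show ?thesis
    by (subst (1 2 3) act_coeff_eq_sum[where W = ?W]) (auto simp: distrib_right sum.distrib)
qed

lemma act_coeff_smult:
  assumes "F \<in> fa_carrier"
  shows "act_coeff (\<lambda>x. c * F x) q q' = c * act_coeff F q q'"
  using assms
  by (subst (1 2) act_coeff_eq_sum[where W = "{w. F w \<noteq> 0}"])
     (auto simp: fa_carrier_iff sum_distrib_left mult.assoc)

lemma act_coeff_diff:
  assumes "F \<in> fa_carrier" "G \<in> fa_carrier"
  shows "act_coeff (\<lambda>x. F x - G x) q q' = act_coeff F q q' - act_coeff G q q'"
  using act_coeff_add[OF assms(1) fa_smult_in_carrier[OF assms(2)], of "- 1"]
    act_coeff_smult[OF assms(2), of "- 1"]
  by simp

lemma act_coeff_sum:
  assumes "finite I" "\<And>i. i \<in> I \<Longrightarrow> F i \<in> fa_carrier"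
  shows "act_coeff (\<lambda>x. \<Sum>i\<in>I. F i x) q q' = (\<Sum>i\<in>I. act_coeff (F i) q q')"
  using assms
proof (induction I rule: finite_induct)
  case empty
  then show ?case by (simp add: act_coeff_def)
next
  case (insert i I)
  then show ?case
    using act_coeff_add[of "F i" "\<lambda>x. \<Sum>i\<in>I. F i x"] fa_sum_in_carrier[of I F] by simp
qed

lemma act_coeff_mon: "act_coeff (fa_mon w) q q' = (word_coeff w q q' :: 'k::field)"
  by (subst act_coeff_eq_sum[where W = "{w}"]) (auto simp: fa_mon_def)

lemma act_coeff_mult_pairs:
  assumes "F \<in> fa_carrier" "G \<in> fa_carrier"
  shows "act_coeff (fa_mult F G) q q''
    = (\<Sum>(u, v)\<in>{w. F w \<noteq> 0} \<times> {w. G w \<noteq> 0}. F u * G v * word_coeff (u @ v) q q'')"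
proof -
  let ?S = "{w. F w \<noteq> 0} \<times> {w. G w \<noteq> 0}"
  let ?c = "\<lambda>(u, v). F u * G v * word_coeff (u @ v) q q''"
  have fin: "finite ?S" using assms by (simp add: fa_carrier_iff)
  have "act_coeff (fa_mult F G) q q'' = (\<Sum>w\<in>(\<lambda>(u, v). u @ v) ` ?S. fa_mult F G w * word_coeff w q q'')"
    by (rule act_coeff_eq_sum[OF _ fa_mult_support]) (use fin in auto)
  also have "\<dots> = (\<Sum>w\<in>(\<lambda>(u, v). u @ v) ` ?S. \<Sum>x\<in>{x \<in> ?S. (\<lambda>(u, v). u @ v) x = w}. ?c x)"
  proof (rule sum.cong[OF refl])
    fix w
    have "fa_mult F G w * word_coeff w q q'' = sum ?c {(u, v). u @ v = w}"
      unfolding fa_mult_def sum_distrib_right by (rule sum.cong) auto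
    also have "\<dots> = (\<Sum>x\<in>{x \<in> ?S. (\<lambda>(u, v). u @ v) x = w}. ?c x)"
      by (rule sum.mono_neutral_right) auto
    finally show "fa_mult F G w * word_coeff w q q'' = (\<Sum>x\<in>{x \<in> ?S. (\<lambda>(u, v). u @ v) x = w}. ?c x)" .
  qed
  also have "\<dots> = sum ?c ?S"
    by (rule sum.group[OF fin]) (use fin in auto)
  finally show ?thesis .
qed

lemma act_coeff_mult:
  assumes F: "F \<in> fa_carrier" and G: "G \<in> fa_carrier"
    and Q: "finite Q" "\<And>q'. act_coeff G q q' \<noteq> 0 \<Longrightarrow> q' \<in> Q"
  shows "act_coeff (fa_mult F G) q q'' = (\<Sum>q'\<in>Q. act_coeff G q q' * act_coeff F q' q'')"
proof -
  let ?SF = "{w. F w \<noteq> 0}" and ?SG = "{w. G w \<noteq> 0}"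
  define Q' where "Q' = Q \<union> (\<lambda>v. the (act_word v q)) ` ?SG"
  have finQ': "finite Q'" using Q G by (simp add: Q'_def fa_carrier_iff)
  have reach: "act_word v q = Some q' \<Longrightarrow> q' \<in> Q'" if "v \<in> ?SG" for v q'
    using that by (force simp: Q'_def)
  have "act_coeff (fa_mult F G) q q''
      = (\<Sum>(u, v)\<in>?SF \<times> ?SG. \<Sum>q'\<in>Q'. G v * word_coeff v q q' * (F u * word_coeff u q' q''))"
    unfolding act_coeff_mult_pairs[OF F G]
    by (rule sum.cong[OF refl])
       (auto simp: word_coeff_append[OF finQ' reach] sum_distrib_left mult_ac)
  also have "\<dots> = (\<Sum>q'\<in>Q'. act_coeff G q q' * act_coeff F q' q'')"
    unfolding act_coeff_def sum_product sum.cartesian_product[symmetric]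
    by (subst sum.swap) (auto intro!: sum.cong simp: sum.swap[of _ Q'])
  also have "\<dots> = (\<Sum>q'\<in>Q. act_coeff G q q' * act_coeff F q' q'')"
    by (rule sum.mono_neutral_right) (use finQ' Q in \<open>auto simp: Q'_def\<close>)
  finally show ?thesis .
qed

end

context
  fixes s r :: "'e \<Rightarrow> 'v"
begin

lemma act_coeff_support:
  "{q'. act_coeff s r G q q' \<noteq> 0} \<subseteq> (\<lambda>v. the (act_word s r v q)) ` {w. G w \<noteq> 0}"
  unfolding act_coeff_def word_coeff_def
  by (force elim!: sum.not_neutral_contains_not_neutral split: if_splits)

lemma finite_act_coeff_support: "G \<in> fa_carrier \<Longrightarrow> finite {q'. act_coeff s r G q q' \<noteq> 0}"
  by (rule finite_subset[OF act_coeff_support]) (simp add: fa_carrier_iff)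

definition act_kernel :: "(('v, 'e) lgen list \<Rightarrow> 'k::field) set" where
  "act_kernel = {F \<in> fa_carrier. \<forall>q q'. act_coeff s r F q q' = 0}"

lemma act_kernel_ideal: "ideal act_kernel (free_alg :: (('v, 'e) lgen list \<Rightarrow> 'k::field) ring)"
proof (rule idealI[OF free_alg_ring])
  interpret ring "free_alg :: (('v, 'e) lgen list \<Rightarrow> 'k) ring" by (rule free_alg_ring)
  show "subgroup act_kernel (add_monoid (free_alg :: (('v, 'e) lgen list \<Rightarrow> 'k) ring))"
  proof (rule add.subgroupI)
    show "act_kernel \<subseteq> carrier (free_alg :: (('v, 'e) lgen list \<Rightarrow> 'k) ring)"
      by (auto simp: act_kernel_def free_alg_simps)
    have "(\<lambda>x. 0) \<in> (act_kernel :: (('v, 'e) lgen list \<Rightarrow> 'k) set)"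
      by (simp add: act_kernel_def act_coeff_def)
    then show "(act_kernel :: (('v, 'e) lgen list \<Rightarrow> 'k) set) \<noteq> {}" by blast
  next
    fix F :: "('v, 'e) lgen list \<Rightarrow> 'k"
    assume "F \<in> act_kernel"
    then show "\<ominus>\<^bsub>free_alg\<^esub> F \<in> act_kernel"
      using act_coeff_smult[where s = s and r = r and F = F and c = "- 1"]
      by (auto simp: act_kernel_def free_alg_a_inv fa_carrier_iff)
  next
    fix F G :: "('v, 'e) lgen list \<Rightarrow> 'k"
    assume "F \<in> act_kernel" "G \<in> act_kernel"
    then show "F \<oplus>\<^bsub>free_alg\<^esub> G \<in> act_kernel"
      by (auto simp: act_kernel_def free_alg_simps act_coeff_add)
  qed
next
  fix F G :: "('v, 'e) lgen list \<Rightarrow> 'k"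
  assume F: "F \<in> act_kernel" and G: "G \<in> carrier free_alg"
  have "act_coeff s r (fa_mult G F) q q'' = 0" for q q''
    using act_coeff_mult[where s = s and r = r and F = G and G = F and Q = "{}"] F G
    by (auto simp: act_kernel_def free_alg_simps)
  then show "G \<otimes>\<^bsub>free_alg\<^esub> F \<in> act_kernel"
    using F G by (auto simp: act_kernel_def free_alg_simps)
  have "act_coeff s r (fa_mult F G) q q'' = 0" for q q''
    using act_coeff_mult[where s = s and r = r and F = F and G = G and Q = "{q'. act_coeff s r G q q' \<noteq> 0}"]
      F G finite_act_coeff_support[of G]
    by (auto simp: act_kernel_def free_alg_simps)
  then show "F \<otimes>\<^bsub>free_alg\<^esub> G \<in> act_kernel"
    using F G by (auto simp: act_kernel_def free_alg_simps)
qed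

lemma word_coeff_Cons:
  "word_coeff s r (g # w) q q' = (if Option.bind (act_word s r w q) (act_gen s r g) = Some q' then 1 else 0)"
  by (simp add: word_coeff_def)

lemma mon_rel_in_act_kernel:
  assumes "\<And>q q'. word_coeff s r A q q' = (if P then word_coeff s r B q q' else 0 :: 'k::field)"
  shows "(\<lambda>x. fa_mon A x - (if P then fa_mon B x else 0) :: 'k) \<in> act_kernel"
  using assms by (cases P) (simp_all add: act_kernel_def act_coeff_diff act_coeff_mon)

lemma mon_diff_in_act_kernel:
  assumes "\<And>q q'. word_coeff s r A q q' = (word_coeff s r B q q' :: 'k::field)"
  shows "(\<lambda>x. fa_mon A x - fa_mon B x :: 'k) \<in> act_kernel"
  using assms by (simp add: act_kernel_def act_coeff_diff act_coeff_mon)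

lemma cuntz_krieger_in_act_kernel:
  assumes "finite {e. s e = v}"
  shows "(\<lambda>x. fa_mon [Vx v] x - (\<Sum>e\<in>{e. s e = v}. fa_mon [Ed e, Gh e] x) :: 'k::field) \<in> act_kernel"
proof -
  let ?E = "{e. s e = v}"
  have sum_in: "(\<lambda>x. \<Sum>e\<in>?E. fa_mon [Ed e, Gh e] x :: 'k) \<in> fa_carrier"
    using assms by (simp add: fa_sum_in_carrier)
  have "act_coeff s r (\<lambda>x. fa_mon [Vx v] x - (\<Sum>e\<in>?E. fa_mon [Ed e, Gh e] x)) q q' = (0 :: 'k)" for q q'
  proof -
    have "act_coeff s r (\<lambda>x. fa_mon [Vx v] x - (\<Sum>e\<in>?E. fa_mon [Ed e, Gh e] x)) q q'
        = word_coeff s r [Vx v] q q' - (\<Sum>e\<in>?E. word_coeff s r [Ed e, Gh e] q q' :: 'k)"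
      using assms sum_in by (subst act_coeff_diff) (simp_all add: act_coeff_sum act_coeff_mon)
    also have "(\<Sum>e\<in>?E. word_coeff s r [Ed e, Gh e] q q')
        = (\<Sum>e\<in>?E. if e = q 0 then (if inf_path s r q \<and> q' = q then 1 else 0) else 0 :: 'k)"
      by (rule sum.cong[OF refl])
         (auto simp: word_coeff_Cons act_gen_def inf_path_path_cons inf_path_tail inf_path_head
                     path_cons_head_tail)
    also have "\<dots> = word_coeff s r [Vx v] q q'"
      using assms by (auto simp: word_coeff_Cons act_gen_def)
    finally show ?thesis by simp
  qed
  then show ?thesis
    using fa_diff_in_carrier[OF fa_mon_in_carrier sum_in] by (simp add: act_kernel_def)
qed

lemma leavitt_rels_subset_act_kernel: "leavitt_rels s r \<subseteq> (act_kernel :: (_ \<Rightarrow> 'k::field) set)"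
proof
  fix R :: "('v, 'e) lgen list \<Rightarrow> 'k"
  assume "R \<in> leavitt_rels s r"
  then consider
      (vv) v v' where "R = (\<lambda>x. fa_mon [Vx v, Vx v'] x - (if v = v' then fa_mon [Vx v] x else 0))"
    | (se) e where "R = (\<lambda>x. fa_mon [Vx (s e), Ed e] x - fa_mon [Ed e] x)"
    | (er) e where "R = (\<lambda>x. fa_mon [Ed e, Vx (r e)] x - fa_mon [Ed e] x)"
    | (rg) e where "R = (\<lambda>x. fa_mon [Vx (r e), Gh e] x - fa_mon [Gh e] x)"
    | (gs) e where "R = (\<lambda>x. fa_mon [Gh e, Vx (s e)] x - fa_mon [Gh e] x)"
    | (ge) e e' where "R = (\<lambda>x. fa_mon [Gh e, Ed e'] x - (if e = e' then fa_mon [Vx (r e)] x else 0))"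
    | (ck) v where "R = (\<lambda>x. fa_mon [Vx v] x - (\<Sum>e\<in>{e. s e = v}. fa_mon [Ed e, Gh e] x))"
        "finite {e. s e = v}"
    unfolding leavitt_rels_def by blast
  then show "R \<in> act_kernel"
  proof cases
    case vv
    show ?thesis unfolding vv
      by (rule mon_rel_in_act_kernel) (auto simp: word_coeff_Cons act_gen_def)
  next
    case se
    show ?thesis unfolding se
      by (rule mon_diff_in_act_kernel) (auto simp: word_coeff_Cons act_gen_def inf_path_path_cons)
  next
    case er
    show ?thesis unfolding er
      by (rule mon_diff_in_act_kernel) (auto simp: word_coeff_Cons act_gen_def inf_path_path_cons)
  next
    case rg
    show ?thesis unfolding rg
      by (rule mon_diff_in_act_kernel)
         (auto simp: word_coeff_Cons act_gen_def inf_path_tail inf_path_head)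
  next
    case gs
    show ?thesis unfolding gs
      by (rule mon_diff_in_act_kernel) (auto simp: word_coeff_Cons act_gen_def)
  next
    case ge
    show ?thesis unfolding ge
      by (rule mon_rel_in_act_kernel) (auto simp: word_coeff_Cons act_gen_def inf_path_path_cons)
  next
    case ck
    then show ?thesis by (simp add: cuntz_krieger_in_act_kernel)
  qed
qed

end

section \<open>The Leavitt path algebra and its units\<close>

lemma (in ring) one_add_square_zero_Units:
  assumes n: "n \<in> carrier R" and nn: "n \<otimes> n = \<zero>"
  shows "\<one> \<oplus> n \<in> Units R" and "inv (\<one> \<oplus> n) = \<one> \<ominus> n"
proof -
  have "(\<one> \<oplus> n) \<otimes> (\<one> \<ominus> n) = \<one>" and "(\<one> \<ominus> n) \<otimes> (\<one> \<oplus> n) = \<one>"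
    using n nn by (simp_all add: minus_eq l_distr r_distr r_minus l_minus a_assoc r_neg l_neg)
  then show "\<one> \<oplus> n \<in> Units R" and "inv (\<one> \<oplus> n) = \<one> \<ominus> n"
    using n by (auto simp: Units_def inv_char)
qed

context
  fixes s r :: "'e \<Rightarrow> 'v"
begin

lemma lpa_ideal_ideal: "ideal (lpa_ideal s r) (free_alg :: (('v, 'e) lgen list \<Rightarrow> 'k::field) ring)"
proof -
  have "leavitt_rels s r \<subseteq> carrier (free_alg :: (('v, 'e) lgen list \<Rightarrow> 'k) ring)"
    using leavitt_rels_subset_act_kernel by (auto simp: act_kernel_def free_alg_simps)
  then show ?thesis
    unfolding lpa_ideal_def by (rule ring.genideal_ideal[OF free_alg_ring])
qed

lemma lpa_ideal_subset_act_kernel: "lpa_ideal s r \<subseteq> (act_kernel s r :: (_ \<Rightarrow> 'k::field) set)"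
  unfolding lpa_ideal_def
  by (rule ring.genideal_minimal[OF free_alg_ring act_kernel_ideal leavitt_rels_subset_act_kernel])

lemma LPA_ring: "ring (LPA s r :: (('v, 'e) lgen list \<Rightarrow> 'k::field) set ring)"
  unfolding LPA_def by (rule ideal.quotient_is_ring[OF lpa_ideal_ideal])

lemma lpa_class_ring_hom_ring:
  "ring_hom_ring free_alg (LPA s r :: (('v, 'e) lgen list \<Rightarrow> 'k::field) set ring) (lpa_class s r)"
proof -
  have "lpa_class s r = (\<lambda>x. lpa_ideal s r +>\<^bsub>(free_alg :: (('v, 'e) lgen list \<Rightarrow> 'k) ring)\<^esub> x)"
    by (rule ext) (simp add: lpa_class_def)
  then show ?thesis
    unfolding LPA_def using ideal.rcos_ring_hom_ring[OF lpa_ideal_ideal] by simp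
qed

lemma LPA_carrier:
  "carrier (LPA s r :: (('v, 'e) lgen list \<Rightarrow> 'k::field) set ring) = lpa_class s r ` fa_carrier"
  unfolding LPA_def FactRing_def A_RCOSETS_def' lpa_class_def by (auto simp: free_alg_simps)

lemma lpa_class_eq_of_rel:
  assumes "(\<lambda>x. F x - G x) \<in> leavitt_rels s r" "F \<in> fa_carrier" "G \<in> fa_carrier"
  shows "lpa_class s r F = (lpa_class s r G :: (('v, 'e) lgen list \<Rightarrow> 'k::field) set)"
proof -
  interpret ideal "lpa_ideal s r" "free_alg :: (('v, 'e) lgen list \<Rightarrow> 'k) ring"
    by (rule lpa_ideal_ideal)
  have "(\<lambda>x. F x - G x) \<in> lpa_ideal s r"
    using assms(1) genideal_self leavitt_rels_subset_act_kernel
    by (auto simp: lpa_ideal_def act_kernel_def free_alg_simps)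
  moreover have "F = (\<lambda>x. F x - G x) \<oplus>\<^bsub>free_alg\<^esub> G"
    by (simp add: free_alg_simps)
  ultimately have "F \<in> lpa_ideal s r +>\<^bsub>free_alg\<^esub> G"
    by (auto simp: a_r_coset_def')
  then show ?thesis
    unfolding lpa_class_def
    by (metis a_repr_independence' assms(3) free_alg_simps(1))
qed

text \<open>\<open>lpa_coeff\<close> picks an arbitrary representative; by \<open>lpa_coeff_class\<close> the choice
  is irrelevant because the relations act trivially.\<close>

definition lpa_coeff :: "(('v, 'e) lgen list \<Rightarrow> 'k::field) set \<Rightarrow> (nat \<Rightarrow> 'e) \<Rightarrow> (nat \<Rightarrow> 'e) \<Rightarrow> 'k" where
  "lpa_coeff x = act_coeff s r (SOME F. F \<in> x)"

lemma lpa_coeff_class: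
  assumes F: "F \<in> fa_carrier"
  shows "lpa_coeff (lpa_class s r F) = (act_coeff s r F :: _ \<Rightarrow> _ \<Rightarrow> 'k::field)"
proof -
  interpret ideal "lpa_ideal s r" "free_alg :: (('v, 'e) lgen list \<Rightarrow> 'k) ring"
    by (rule lpa_ideal_ideal)
  have "act_coeff s r G = act_coeff s r F" if "G \<in> lpa_class s r F" for G
  proof -
    obtain H where H: "H \<in> lpa_ideal s r" "G = (\<lambda>x. H x + F x)"
      using \<open>G \<in> lpa_class s r F\<close> by (auto simp: lpa_class_def a_r_coset_def' free_alg_simps)
    then have "H \<in> act_kernel s r"
      using lpa_ideal_subset_act_kernel by blast
    then have "act_coeff s r G q q' = act_coeff s r F q q'" for q q'
      using H(2) F act_coeff_add[of H F s r q q'] by (simp add: act_kernel_def)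
    then show ?thesis by (intro ext)
  qed
  moreover have "F \<in> lpa_class s r F"
    using F by (simp add: lpa_class_def a_rcos_self free_alg_simps)
  ultimately show ?thesis
    unfolding lpa_coeff_def by (metis someI)
qed

lemma lpa_coeff_one: "lpa_coeff \<one>\<^bsub>LPA s r\<^esub> q q' = (if q' = q then 1 else (0 :: 'k::field))"
proof -
  interpret h: ring_hom_ring free_alg "LPA s r :: (('v, 'e) lgen list \<Rightarrow> 'k) set ring" "lpa_class s r"
    by (rule lpa_class_ring_hom_ring)
  have "lpa_coeff \<one>\<^bsub>LPA s r\<^esub> = (act_coeff s r (fa_mon []) :: _ \<Rightarrow> _ \<Rightarrow> 'k)"
    by (metis h.hom_one fa_mon_in_carrier lpa_coeff_class free_alg_simps(5))
  then show ?thesis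
    by (simp add: act_coeff_mon word_coeff_def)
qed

lemma lpa_coeff_mult:
  assumes x: "x \<in> carrier (LPA s r)" and y: "y \<in> carrier (LPA s r)"
    and Q: "finite Q" "\<And>q'. lpa_coeff y q q' \<noteq> 0 \<Longrightarrow> q' \<in> Q"
  shows "lpa_coeff (x \<otimes>\<^bsub>LPA s r\<^esub> y) q q'' = (\<Sum>q'\<in>Q. lpa_coeff y q q' * lpa_coeff x q' q'' :: 'k::field)"
proof -
  interpret h: ring_hom_ring free_alg "LPA s r :: (('v, 'e) lgen list \<Rightarrow> 'k) set ring" "lpa_class s r"
    by (rule lpa_class_ring_hom_ring)
  obtain F G where F: "F \<in> fa_carrier" "x = lpa_class s r F" and G: "G \<in> fa_carrier" "y = lpa_class s r G"
    using x y by (auto simp: LPA_carrier)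
  have "x \<otimes>\<^bsub>LPA s r\<^esub> y = lpa_class s r (fa_mult F G)"
    using h.hom_mult[of F G] F G by (simp add: free_alg_simps)
  then show ?thesis
    using act_coeff_mult[of F G Q s r q] Q F G by (simp add: lpa_coeff_class)
qed

lemma act_coeff_one_add_gen:
  "act_coeff s r (one_add_gen c g) q q' = (if q' = q then 1 else 0) + c * word_coeff s r [g] q q'"
  by (simp add: one_add_gen_def act_coeff_add act_coeff_smult act_coeff_mon word_coeff_def)

lemma lpa_class_mon_append:
  "lpa_class s r (fa_mon (u @ v))
    = lpa_class s r (fa_mon u) \<otimes>\<^bsub>LPA s r\<^esub> (lpa_class s r (fa_mon v) :: (_ \<Rightarrow> 'k::field) set)"
proof -
  interpret h: ring_hom_ring free_alg "LPA s r :: (('v, 'e) lgen list \<Rightarrow> 'k) set ring" "lpa_class s r"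
    by (rule lpa_class_ring_hom_ring)
  show ?thesis
    using h.hom_mult[of "fa_mon u" "fa_mon v"] by (simp add: free_alg_simps fa_mult_mon)
qed

lemma lpa_class_vertex_orthogonal:
  assumes "v \<noteq> v'"
  shows "lpa_class s r (fa_mon [Vx v, Vx v']) = (\<zero>\<^bsub>LPA s r\<^esub> :: (_ \<Rightarrow> 'k::field) set)"
proof -
  interpret h: ring_hom_ring free_alg "LPA s r :: (('v, 'e) lgen list \<Rightarrow> 'k) set ring" "lpa_class s r"
    by (rule lpa_class_ring_hom_ring)
  have "(\<lambda>x. fa_mon [Vx v, Vx v'] x - (if v = v' then fa_mon [Vx v] x else 0) :: 'k) \<in> leavitt_rels s r"
    unfolding leavitt_rels_def by blast
  then have "(\<lambda>x. fa_mon [Vx v, Vx v'] x - (\<lambda>x. 0 :: 'k) x) \<in> leavitt_rels s r"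
    using assms by simp
  then show ?thesis
    using lpa_class_eq_of_rel h.hom_zero by (fastforce simp: free_alg_simps)
qed

lemma lpa_class_mon_square_zero:
  assumes "v \<noteq> v'"
    and right: "(\<lambda>x. fa_mon [g, Vx v] x - fa_mon [g] x :: 'k::field) \<in> leavitt_rels s r"
    and left: "(\<lambda>x. fa_mon [Vx v', g] x - fa_mon [g] x :: 'k) \<in> leavitt_rels s r"
  shows "lpa_class s r (fa_mon [g, g]) = (\<zero>\<^bsub>LPA s r\<^esub> :: (_ \<Rightarrow> 'k) set)"
proof -
  interpret ring "LPA s r :: (('v, 'e) lgen list \<Rightarrow> 'k) set ring"
    by (rule LPA_ring)
  let ?m = "\<lambda>w. lpa_class s r (fa_mon w) :: (_ \<Rightarrow> 'k) set"
  have closed: "?m w \<in> carrier (LPA s r)" for w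
    by (auto simp: LPA_carrier)
  have "?m [g, g]
      = (?m [g] \<otimes>\<^bsub>LPA s r\<^esub> ?m [Vx v]) \<otimes>\<^bsub>LPA s r\<^esub> (?m [Vx v'] \<otimes>\<^bsub>LPA s r\<^esub> ?m [g])"
    using lpa_class_eq_of_rel[OF right] lpa_class_eq_of_rel[OF left]
    by (simp flip: lpa_class_mon_append)
  also have "\<dots> = ?m [g] \<otimes>\<^bsub>LPA s r\<^esub> ?m [Vx v, Vx v'] \<otimes>\<^bsub>LPA s r\<^esub> ?m [g]"
    using closed by (simp add: m_assoc lpa_class_mon_append[of "[_]" "[_]", simplified])
  also have "\<dots> = \<zero>\<^bsub>LPA s r\<^esub>"
    using closed by (simp add: lpa_class_vertex_orthogonal[OF \<open>v \<noteq> v'\<close>])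
  finally show ?thesis .
qed

lemma lpa_class_one_add_gen_Units:
  assumes "lpa_class s r (fa_mon [g, g]) = (\<zero>\<^bsub>LPA s r\<^esub> :: (_ \<Rightarrow> 'k::field) set)"
  shows "lpa_class s r (one_add_gen c g) \<in> Units (LPA s r :: (_ \<Rightarrow> 'k) set ring)"
    and "inv\<^bsub>LPA s r\<^esub> (lpa_class s r (one_add_gen c g))
      = (lpa_class s r (one_add_gen (- c) g) :: (_ \<Rightarrow> 'k) set)"
proof -
  interpret h: ring_hom_ring free_alg "LPA s r :: (('v, 'e) lgen list \<Rightarrow> 'k) set ring" "lpa_class s r"
    by (rule lpa_class_ring_hom_ring)
  let ?L = "LPA s r :: (('v, 'e) lgen list \<Rightarrow> 'k) set ring"
  let ?cg = "\<lambda>x. c * fa_mon [g] x :: 'k"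
  define n where "n = lpa_class s r ?cg"
  have n: "n \<in> carrier ?L"
    by (auto simp: n_def LPA_carrier)
  have "fa_mult ?cg ?cg = fa_mult (\<lambda>x. (c * c) * fa_mon [] x) (fa_mon [g, g])"
    by (simp add: fa_mult_smult_left fa_mult_smult_right fa_mult_one_left fa_mult_mon mult.assoc)
  then have "n \<otimes>\<^bsub>?L\<^esub> n = lpa_class s r (\<lambda>x. (c * c) * fa_mon [] x) \<otimes>\<^bsub>?L\<^esub> \<zero>\<^bsub>?L\<^esub>"
    using h.hom_mult[of ?cg ?cg] h.hom_mult[of "\<lambda>x. (c * c) * fa_mon [] x" "fa_mon [g, g]"] assms
    by (simp add: n_def free_alg_simps)
  then have nn: "n \<otimes>\<^bsub>?L\<^esub> n = \<zero>\<^bsub>?L\<^esub>"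
    by (simp add: LPA_carrier)
  have "lpa_class s r (one_add_gen c g) = \<one>\<^bsub>?L\<^esub> \<oplus>\<^bsub>?L\<^esub> n"
    using h.hom_add[of "fa_mon []" ?cg] h.hom_one by (simp add: one_add_gen_def n_def free_alg_simps)
  moreover have "lpa_class s r (one_add_gen (- c) g) = \<one>\<^bsub>?L\<^esub> \<ominus>\<^bsub>?L\<^esub> n"
    using h.hom_add[of "fa_mon []" "\<lambda>x. - ?cg x"] h.hom_a_inv[of ?cg] h.hom_one
      fa_smult_in_carrier[OF fa_mon_in_carrier[of "[g]"], of "- c"]
    by (simp add: one_add_gen_def n_def free_alg_simps free_alg_a_inv a_minus_def)
  ultimately show "lpa_class s r (one_add_gen c g) \<in> Units ?L"
    and "inv\<^bsub>?L\<^esub> (lpa_class s r (one_add_gen c g)) = lpa_class s r (one_add_gen (- c) g)"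
    using ring.one_add_square_zero_Units[OF LPA_ring n nn] by simp_all
qed

lemma lpa_class_ghost_square_zero:
  assumes "s f \<noteq> r f"
  shows "lpa_class s r (fa_mon [Gh f, Gh f]) = (\<zero>\<^bsub>LPA s r\<^esub> :: (_ \<Rightarrow> 'k::field) set)"
  by (rule lpa_class_mon_square_zero[OF assms]) (unfold leavitt_rels_def; blast)+

lemma lpa_class_edge_square_zero:
  assumes "s f \<noteq> r f"
  shows "lpa_class s r (fa_mon [Ed f, Ed f]) = (\<zero>\<^bsub>LPA s r\<^esub> :: (_ \<Rightarrow> 'k::field) set)"
  by (rule lpa_class_mon_square_zero[OF assms[symmetric]]) (unfold leavitt_rels_def; blast)+

end

section \<open>Ping-pong for the Sanov matrices\<close>

text \<open>The Sanov matrices with rows $(1, \<pm>2), (0, 1)$ and $(1, 0), (\<pm>2, 1)$ acting on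
  $\mathbb{Z}^2$.  A letter is the pair (sign of the exponent, whether the matrix is upper
  triangular).\<close>

definition sanov_step :: "bool \<times> bool \<Rightarrow> int \<times> int \<Rightarrow> int \<times> int" where
  "sanov_step l = (\<lambda>(x, y). let c = if fst l then 2 else - 2 in
     if snd l then (x + c * y, y) else (x, y + c * x))"

definition sanov_word :: "(bool \<times> bool) list \<Rightarrow> int \<times> int \<Rightarrow> int \<times> int" where
  "sanov_word w v = foldr sanov_step w v"

text \<open>The sign of \<open>x y\<close> records the sign of the exponent of the last letter applied, so that
  repeating a letter keeps the vector in its cone.\<close>

definition sanov_cone :: "bool \<times> bool \<Rightarrow> int \<times> int \<Rightarrow> bool" where
  "sanov_cone l = (\<lambda>(x, y). (if fst l then 0 < x * y else x * y < 0) \<and>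
     (if snd l then \<bar>y\<bar> < \<bar>x\<bar> else \<bar>x\<bar> < \<bar>y\<bar>))"

definition sanov_domain :: "bool \<times> bool \<Rightarrow> int \<times> int \<Rightarrow> bool" where
  "sanov_domain l = (\<lambda>(x, y). if snd l then \<bar>x\<bar> < \<bar>y\<bar> else \<bar>y\<bar> < \<bar>x\<bar>)"

lemma sanov_step_into_cone:
  assumes "sanov_domain l v \<or> sanov_cone l v"
  shows "sanov_cone l (sanov_step l v)"
  using assms
  by (cases l; cases v)
     (auto simp: sanov_step_def sanov_cone_def sanov_domain_def zero_less_mult_iff mult_less_0_iff)

lemma sanov_cone_imp_domain:
  assumes "sanov_cone l' v" "\<not> (snd l = snd l' \<and> fst l \<noteq> fst l')"
  shows "sanov_domain l v \<or> sanov_cone l v"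
proof (cases "snd l = snd l'")
  case True
  then have "l = l'"
    using assms(2) by (simp add: prod_eq_iff)
  then show ?thesis
    using assms(1) by simp
next
  case False
  then show ?thesis
    using assms(1) by (cases v) (auto simp: sanov_cone_def sanov_domain_def split: if_splits)
qed

lemma reduced_word_Cons_Cons:
  "reduced_word (l # l' # w) \<longleftrightarrow> \<not> (snd l = snd l' \<and> fst l \<noteq> fst l') \<and> reduced_word (l' # w)"
  unfolding reduced_word_def by (auto simp: less_Suc_eq_0_disj nth_Cons split: nat.splits)

lemma sanov_word_ping_pong:
  assumes "w \<noteq> []" "reduced_word w" "sanov_domain (last w) v"
  shows "sanov_cone (hd w) (sanov_word w v)"
  using assms
proof (induction w rule: induct_list012)
  case (2 l)
  then show ?case by (simp add: sanov_word_def sanov_step_into_cone)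
next
  case (3 l l' w)
  then have "sanov_cone l' (sanov_word (l' # w) v)"
    by (simp add: reduced_word_Cons_Cons)
  then have "sanov_domain l (sanov_word (l' # w) v) \<or> sanov_cone l (sanov_word (l' # w) v)"
    using 3 by (intro sanov_cone_imp_domain) (auto simp: reduced_word_Cons_Cons)
  then show ?case
    by (simp add: sanov_word_def sanov_step_into_cone)
qed simp

theorem sanov_word_ne_id:
  assumes "w \<noteq> []" "reduced_word w"
  shows "sanov_word w (1, 0) \<noteq> (1, 0) \<or> sanov_word w (0, 1) \<noteq> (0, 1)"
proof -
  define v where "v = (if snd (last w) then (0, 1) else (1, 0) :: int \<times> int)"
  have "sanov_cone (hd w) (sanov_word w v)"
    using assms by (intro sanov_word_ping_pong) (auto simp: v_def sanov_domain_def)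
  moreover have "\<not> sanov_cone (hd w) v"
    by (auto simp: v_def sanov_cone_def)
  ultimately show ?thesis
    by (auto simp: v_def split: if_splits)
qed

lemma cyclic_group_imp_comm_group:
  assumes "cyclic_group G"
  shows "comm_group G"
proof -
  interpret group G
    using assms by (simp add: cyclic_group_def)
  obtain g where g: "g \<in> carrier G" "generate G {g} = carrier G"
    using assms by (auto simp: cyclic_group_def)
  then have "carrier G = range (\<lambda>n::int. g [^]\<^bsub>G\<^esub> n)"
    by (auto simp: generate_pow)
  then have "Elementary_Groups.cyclic_group G"
    using g(1) group.cyclic_group[OF is_group] by blast
  then show ?thesis
    by (rule cyclic_imp_abelian_group)
qed

lemma word_val_commutator:
  fixes G (structure)
  assumes "group G" "a \<in> carrier G" "b \<in> carrier G" "a \<otimes> b = b \<otimes> a"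
  shows "word_val G [(True, a), (True, b), (False, a), (False, b)] = \<one>"
proof -
  interpret group G by fact
  have "word_val G [(True, a), (True, b), (False, a), (False, b)] = (a \<otimes> b) \<otimes> (inv a \<otimes> inv b)"
    using assms(2,3) by (simp add: word_val_def letter_val_def m_assoc)
  also have "\<dots> = (b \<otimes> a) \<otimes> inv (b \<otimes> a)"
    using assms(2-4) by (simp add: inv_mult_group)
  finally show ?thesis
    using assms(2,3) by simp
qed

lemma word_val_closed:
  assumes "group G" "set (map snd w) \<subseteq> carrier G"
  shows "word_val G w \<in> carrier G"
  using assms(2)
  by (induction w) (auto simp: word_val_def letter_val_def group.is_monoid[OF assms(1)]
      monoid.m_closed group.inv_closed[OF assms(1)])

lemma word_val_subgroup:
  assumes "group G" "subgroup H G" "set (map snd w) \<subseteq> H"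
  shows "word_val (G\<lparr>carrier := H\<rparr>) w = word_val G w"
  using assms(3)
  by (induction w) (auto simp: word_val_def letter_val_def group.m_inv_consistent[OF assms(1,2)])

lemma reduced_word_map_apsnd:
  assumes "inj_on h (set (map snd w))"
  shows "reduced_word (map (apsnd h) w) \<longleftrightarrow> reduced_word w"
proof -
  have "h (snd (w ! i)) = h (snd (w ! j)) \<longleftrightarrow> snd (w ! i) = snd (w ! j)"
    if "i < length w" "j < length w" for i j
    using assms that by (auto dest: inj_onD)
  then show ?thesis
    unfolding reduced_word_def by (auto simp: apsnd_def map_prod_def split_beta)
qed

lemma free_group_generate:
  assumes G: "group G" and B: "B \<subseteq> carrier G"
    and free: "\<And>w. w \<noteq> [] \<Longrightarrow> set (map snd w) \<subseteq> B \<Longrightarrow> reduced_word w \<Longrightarrow> word_val G w \<noteq> \<one>\<^bsub>G\<^esub>"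
  shows "free_group (G\<lparr>carrier := generate G B\<rparr>)"
proof -
  interpret group G by (rule G)
  have sub: "subgroup (generate G B) G"
    using B by (rule generate_is_subgroup)
  have B_gen: "B \<subseteq> generate G B"
    by (auto intro: generate.incl)
  have "free_basis (G\<lparr>carrier := generate G B\<rparr>) B"
    unfolding free_basis_def
    using B_gen generate_consistent[OF B_gen sub] free word_val_subgroup[OF G sub] B_gen
    by auto
  then show ?thesis
    using subgroup.subgroup_is_group[OF sub G] by (auto simp: free_group_def)
qed

lemma not_cyclic_generate:
  assumes G: "group G" and B: "B \<subseteq> carrier G" and ab: "a \<in> B" "b \<in> B" "a \<noteq> b"
    and free: "\<And>w. w \<noteq> [] \<Longrightarrow> set (map snd w) \<subseteq> B \<Longrightarrow> reduced_word w \<Longrightarrow> word_val G w \<noteq> \<one>\<^bsub>G\<^esub>"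
  shows "\<not> cyclic_group (G\<lparr>carrier := generate G B\<rparr>)"
proof
  assume "cyclic_group (G\<lparr>carrier := generate G B\<rparr>)"
  then interpret comm_group "G\<lparr>carrier := generate G B\<rparr>"
    by (rule cyclic_group_imp_comm_group)
  have "a \<in> generate G B" "b \<in> generate G B"
    using ab by (auto intro: generate.incl)
  then have "word_val G [(True, a), (True, b), (False, a), (False, b)] = \<one>\<^bsub>G\<^esub>"
    using ab B m_comm by (intro word_val_commutator[OF G]) auto
  moreover have "reduced_word [(True, a), (True, b), (False, a), (False, b)]"
    using ab(3) by (auto simp: reduced_word_def less_Suc_eq nth_Cons split: nat.splits)
  ultimately show False
    using free[of "[(True, a), (True, b), (False, a), (False, b)]"] ab by auto
qed

context
  fixes s r :: "'e \<Rightarrow> 'v" and f :: 'e and p :: "nat \<Rightarrow> 'e"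
begin

definition pair_vec :: "int \<times> int \<Rightarrow> (nat \<Rightarrow> 'e) \<Rightarrow> 'k::field" where
  "pair_vec v q =
    (if q = p then of_int (fst v) else 0) + (if q = path_cons f p then of_int (snd v) else 0)"

definition sanov_gen :: "bool \<times> bool \<Rightarrow> (('v, 'e) lgen list \<Rightarrow> 'k::field) set" where
  "sanov_gen l =
    lpa_class s r (one_add_gen (if fst l then 2 else - 2) (if snd l then Gh f else Ed f))"

context
  assumes path: "inf_path s r p" and not_loop: "s f \<noteq> r f" and joins: "r f = s (p 0)"
begin

lemma path_head_ne_edge: "p 0 \<noteq> f"
  using joins not_loop by auto

lemma path_ne_path_cons: "p \<noteq> path_cons f p"
  using path_head_ne_edge by (metis path_cons_simps(1))

lemma word_coeff_ghost:
  "word_coeff s r [Gh f] p q = 0"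
  "word_coeff s r [Gh f] (path_cons f p) q = (if q = p then 1 else 0)"
  using path joins path_head_ne_edge
  by (auto simp: word_coeff_def act_gen_def inf_path_path_cons)

lemma word_coeff_edge:
  "word_coeff s r [Ed f] p q = (if q = path_cons f p then 1 else 0)"
  "word_coeff s r [Ed f] (path_cons f p) q = 0"
  using path joins not_loop
  by (auto simp: word_coeff_def act_gen_def inf_path_path_cons)

lemma pair_vec_inj:
  assumes "pair_vec u = (pair_vec v :: _ \<Rightarrow> 'k::field_char_0)"
  shows "u = v"
proof -
  have "(of_int (fst u) :: 'k) = of_int (fst v)" "(of_int (snd u) :: 'k) = of_int (snd v)"
    using fun_cong[OF assms, of p] fun_cong[OF assms, of "path_cons f p"] path_ne_path_cons
    by (simp_all add: pair_vec_def)
  then show ?thesis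
    by (simp add: prod_eq_iff)
qed

lemma sanov_gen_Units:
  "sanov_gen l \<in> Units (LPA s r :: (_ \<Rightarrow> 'k::field) set ring)"
  "inv\<^bsub>LPA s r\<^esub> (sanov_gen l) = (sanov_gen (\<not> fst l, snd l) :: (_ \<Rightarrow> 'k) set)"
proof -
  define g :: "('v, 'e) lgen" where "g = (if snd l then Gh f else Ed f)"
  have "lpa_class s r (fa_mon [g, g]) = (\<zero>\<^bsub>LPA s r\<^esub> :: (_ \<Rightarrow> 'k) set)"
    using lpa_class_ghost_square_zero[where 'k = 'k and s = s and r = r and f = f, OF not_loop]
      lpa_class_edge_square_zero[where 'k = 'k and s = s and r = r and f = f, OF not_loop]
    by (simp add: g_def)
  from lpa_class_one_add_gen_Units[OF this, of "if fst l then 2 else - 2"]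
  show "sanov_gen l \<in> Units (LPA s r :: (_ \<Rightarrow> 'k::field) set ring)"
    and "inv\<^bsub>LPA s r\<^esub> (sanov_gen l) = (sanov_gen (\<not> fst l, snd l) :: (_ \<Rightarrow> 'k) set)"
    by (auto simp: sanov_gen_def g_def)
qed

lemma lpa_coeff_sanov_gen:
  "lpa_coeff s r (sanov_gen l) p = (pair_vec (sanov_step l (1, 0)) :: _ \<Rightarrow> 'k::field)"
  "lpa_coeff s r (sanov_gen l) (path_cons f p) = (pair_vec (sanov_step l (0, 1)) :: _ \<Rightarrow> 'k)"
proof -
  have "lpa_coeff s r (sanov_gen l) q q' = (if q' = q then 1 else 0)
      + (if fst l then 2 else - 2) * (word_coeff s r [if snd l then Gh f else Ed f] q q' :: 'k)" for q q'
    by (simp add: sanov_gen_def lpa_coeff_class act_coeff_one_add_gen)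
  then show "lpa_coeff s r (sanov_gen l) p = (pair_vec (sanov_step l (1, 0)) :: _ \<Rightarrow> 'k::field)"
    and "lpa_coeff s r (sanov_gen l) (path_cons f p) = (pair_vec (sanov_step l (0, 1)) :: _ \<Rightarrow> 'k)"
    using path_ne_path_cons
    by (cases l; simp add: fun_eq_iff word_coeff_ghost word_coeff_edge pair_vec_def sanov_step_def)+
qed

lemma lpa_coeff_one_pair_vec:
  "lpa_coeff s r \<one>\<^bsub>LPA s r\<^esub> p = (pair_vec (1, 0) :: _ \<Rightarrow> 'k::field)"
  "lpa_coeff s r \<one>\<^bsub>LPA s r\<^esub> (path_cons f p) = (pair_vec (0, 1) :: _ \<Rightarrow> 'k)"
  using path_ne_path_cons by (auto simp: fun_eq_iff lpa_coeff_one pair_vec_def)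

lemma sanov_gen_ghost_ne_edge:
  "sanov_gen (True, True) \<noteq> (sanov_gen (True, False) :: (_ \<Rightarrow> 'k::field_char_0) set)"
proof
  assume "sanov_gen (True, True) = (sanov_gen (True, False) :: (_ \<Rightarrow> 'k) set)"
  then have "(pair_vec (sanov_step (True, True) (0, 1)) :: _ \<Rightarrow> 'k)
      = pair_vec (sanov_step (True, False) (0, 1))"
    by (metis lpa_coeff_sanov_gen(2))
  then show False
    by (auto dest!: pair_vec_inj simp: sanov_step_def)
qed

lemma lpa_coeff_mult_sanov_gen:
  assumes x: "x \<in> carrier (LPA s r)" and v: "lpa_coeff s r x q = (pair_vec v :: _ \<Rightarrow> 'k::field)"
  shows "lpa_coeff s r (sanov_gen l \<otimes>\<^bsub>LPA s r\<^esub> x) q = (pair_vec (sanov_step l v) :: _ \<Rightarrow> 'k)"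
proof
  fix q''
  have gen: "sanov_gen l \<in> carrier (LPA s r :: (_ \<Rightarrow> 'k) set ring)"
    by (rule monoid.Units_closed[OF ring.is_monoid[OF LPA_ring] sanov_gen_Units(1)])
  have "lpa_coeff s r (sanov_gen l \<otimes>\<^bsub>LPA s r\<^esub> x) q q''
      = (\<Sum>q'\<in>{p, path_cons f p}. lpa_coeff s r x q q' * lpa_coeff s r (sanov_gen l) q' q'')"
    using v by (intro lpa_coeff_mult[OF gen x]) (auto simp: pair_vec_def split: if_splits)
  also have "\<dots> = of_int (fst v) * pair_vec (sanov_step l (1, 0)) q''
      + of_int (snd v) * pair_vec (sanov_step l (0, 1)) q''"
    using path_ne_path_cons by (simp add: v lpa_coeff_sanov_gen pair_vec_def)
  also have "\<dots> = pair_vec (sanov_step l v) q''"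
    by (cases l; cases v) (auto simp: pair_vec_def sanov_step_def algebra_simps)
  finally show "lpa_coeff s r (sanov_gen l \<otimes>\<^bsub>LPA s r\<^esub> x) q q'' = pair_vec (sanov_step l v) q''" .
qed

lemma letter_val_sanov_gen:
  assumes "x \<in> {sanov_gen (True, True), sanov_gen (True, False)}"
  shows "letter_val (units_of (LPA s r)) (e, x)
    = (sanov_gen (e, x = sanov_gen (True, True)) :: (_ \<Rightarrow> 'k::field) set)"
  using assms sanov_gen_Units[where 'k = 'k]
  by (cases "x = sanov_gen (True, True)")
     (auto simp: letter_val_def monoid.units_of_inv[OF ring.is_monoid[OF LPA_ring]])

lemma lpa_coeff_word_val:
  assumes "set (map snd w) \<subseteq> {sanov_gen (True, True), sanov_gen (True, False)}"
    and "lpa_coeff s r \<one>\<^bsub>LPA s r\<^esub> q = (pair_vec v :: _ \<Rightarrow> 'k::field)"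
  shows "lpa_coeff s r (word_val (units_of (LPA s r)) w) q
    = (pair_vec (sanov_word (map (apsnd (\<lambda>x. x = sanov_gen (True, True))) w) v) :: _ \<Rightarrow> 'k)"
  using assms(1)
proof (induction w)
  case Nil
  then show ?case
    using assms(2) by (simp add: word_val_def sanov_word_def units_of_one)
next
  case (Cons l w)
  let ?L = "LPA s r :: (_ \<Rightarrow> 'k) set ring"
  obtain e x where l: "l = (e, x)" by fastforce
  have x: "x \<in> {sanov_gen (True, True), sanov_gen (True, False)}"
    and w: "set (map snd w) \<subseteq> {sanov_gen (True, True), sanov_gen (True, False)}"
    using Cons.prems l by auto
  have "{sanov_gen (True, True), sanov_gen (True, False)} \<subseteq> carrier (units_of ?L)"
    using sanov_gen_Units(1) by (auto simp: units_of_carrier)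
  then have "word_val (units_of ?L) w \<in> carrier (units_of ?L)"
    using w by (intro word_val_closed[OF monoid.units_group[OF ring.is_monoid[OF LPA_ring]]]) blast
  then have "word_val (units_of ?L) w \<in> carrier ?L"
    by (auto simp: units_of_carrier Units_def)
  moreover have "word_val (units_of ?L) (l # w)
      = sanov_gen (e, x = sanov_gen (True, True)) \<otimes>\<^bsub>?L\<^esub> word_val (units_of ?L) w"
    using letter_val_sanov_gen[OF x] by (simp add: word_val_def l units_of_mult)
  ultimately show ?case
    using lpa_coeff_mult_sanov_gen Cons.IH[OF w] by (simp add: l sanov_word_def)
qed

theorem sanov_word_val_ne_one:
  assumes "w \<noteq> []" "reduced_word w"
    and "set (map snd w) \<subseteq> {sanov_gen (True, True), sanov_gen (True, False)}"
  shows "word_val (units_of (LPA s r)) w \<noteq> (\<one>\<^bsub>LPA s r\<^esub> :: (_ \<Rightarrow> 'k::field_char_0) set)"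
proof
  let ?w = "map (apsnd (\<lambda>x. x = sanov_gen (True, True))) w"
  assume one: "word_val (units_of (LPA s r)) w = (\<one>\<^bsub>LPA s r\<^esub> :: (_ \<Rightarrow> 'k) set)"
  have "inj_on (\<lambda>x. x = sanov_gen (True, True)) (set (map snd w))"
    using assms(3) sanov_gen_ghost_ne_edge[where 'k = 'k] by (auto simp: inj_on_def)
  then have "?w \<noteq> []" "reduced_word ?w"
    using assms(1,2) reduced_word_map_apsnd by auto
  moreover have "(pair_vec (sanov_word ?w (1, 0)) :: _ \<Rightarrow> 'k) = pair_vec (1, 0)"
    and "(pair_vec (sanov_word ?w (0, 1)) :: _ \<Rightarrow> 'k) = pair_vec (0, 1)"
    using lpa_coeff_word_val[OF assms(3) lpa_coeff_one_pair_vec(1)]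
      lpa_coeff_word_val[OF assms(3) lpa_coeff_one_pair_vec(2)]
    by (simp_all add: one lpa_coeff_one_pair_vec)
  then have "sanov_word ?w (1, 0) = (1, 0)" "sanov_word ?w (0, 1) = (0, 1)"
    by (auto dest: pair_vec_inj)
  ultimately show False
    using sanov_word_ne_id by blast
qed

end

end

theorem lemma4p7:
  fixes s r :: "'e \<Rightarrow> 'v::finite"
    and f :: 'e and p :: "nat \<Rightarrow> 'e"
  assumes "inf_path s r p"
    and "s f \<noteq> r f" and "r f = s (p 0)"
  defines "L \<equiv> (LPA s r :: (('v, 'e) lgen list \<Rightarrow> 'k::field_char_0) set ring)"
    and "a \<equiv> lpa_class s r (\<lambda>x. fa_mon [] x + 2 * fa_mon [Gh f] x) :: (('v, 'e) lgen list \<Rightarrow> 'k) set"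
    and "b \<equiv> lpa_class s r (\<lambda>x. fa_mon [] x + 2 * fa_mon [Ed f] x) :: (('v, 'e) lgen list \<Rightarrow> 'k) set"
  shows "a \<in> Units L \<and> b \<in> Units L \<and>
         free_group ((units_of L)\<lparr>carrier := generate (units_of L) {a, b}\<rparr>) \<and>
         \<not> cyclic_group ((units_of L)\<lparr>carrier := generate (units_of L) {a, b}\<rparr>)"
proof -
  have a: "a = sanov_gen s r f (True, True)" and b: "b = sanov_gen s r f (True, False)"
    by (simp_all add: a_def b_def sanov_gen_def one_add_gen_def)
  have units: "a \<in> Units L" "b \<in> Units L"
    unfolding a b L_def using sanov_gen_Units(1)[OF assms(1-3)] by auto
  have group: "group (units_of L)"
    unfolding L_def by (rule monoid.units_group[OF ring.is_monoid[OF LPA_ring]])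
  have sub: "{a, b} \<subseteq> carrier (units_of L)"
    using units by (simp add: units_of_carrier)
  have free: "word_val (units_of L) w \<noteq> \<one>\<^bsub>units_of L\<^esub>"
    if "w \<noteq> []" "set (map snd w) \<subseteq> {a, b}" "reduced_word w" for w
    using sanov_word_val_ne_one[OF assms(1-3) that(1,3)] that(2)
    unfolding a b L_def by (simp add: units_of_one)
  have "a \<noteq> b"
    unfolding a b by (rule sanov_gen_ghost_ne_edge[OF assms(1-3)])
  then show ?thesis
    using units free_group_generate[OF group sub free] not_cyclic_generate[OF group sub _ _ _ free]
    by auto
qed

end
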